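(* Let $q$ be a power of the prime $p$ and let $\mathcal{G}$ be a subgroup of $(\mathbb{F}_q,+)$ of order $p$. If there exists a $\mathcal{G}$-fixed c-Wieferich prime in $\mathbb{F}_q[T]$ of degree $p$, then every $\mathcal{G}$-fixed monic irreducible polynomial in $\mathbb{F}_q[T]$ of degree $p$ is a c-Wieferich prime in $\mathbb{F}_{q^r}[T]$ for at least one $r\in\{1,\ldots,p-1\}$.
   Context: For a prime power $Q$, the Carlitz module over $\mathbb{F}_Q[T]$: $\rho_N(X)$ for $N\in\mathbb{F}_Q[T]$ is the additive polynomial determined by requiring $N\mapsto\rho_N$ to be an $\mathbb{F}_Q$-algebra homomorphism into additive polynomials (multiplication = composition) with $\rho_T(X)=X^Q+TX$. A monic irreducible $\mathcal{P}\in\mathbb{F}_Q[T]$ is a c-Wieferich prime in $\mathbb{F}_Q[T]$ if $\rho_{\mathcal{P}-1}(1)\equiv0\pmod{\mathcal{P}^2}$. A polynomial $f$ is $\mathcal{G}$-fixed if $f(T+a)=f(T)$ for all $a\in\mathcal{G}$. *)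

theory Defs
  imports "HOL-Computational_Algebra.Computational_Algebra" "HOL-Library.Cardinality"
begin

text \<open>Carlitz module with parameter Q (the size of the constant field F_Q).
  rho_T(X) = X^Q + T X, and rho_N = sum_i c_i rho_T^i for N = sum_i c_i T^i
  (this is the unique F_Q-algebra homomorphism into additive polynomials,
  composition as multiplication).\<close>

definition carlitz_T :: "nat \<Rightarrow> 'a::comm_ring_1 poly \<Rightarrow> 'a poly" where
  "carlitz_T Q x = x ^ Q + [:0, 1:] * x"

definition carlitz :: "nat \<Rightarrow> 'a::comm_ring_1 poly \<Rightarrow> 'a poly \<Rightarrow> 'a poly" where
  "carlitz Q N x = (\<Sum>i\<le>degree N. smult (coeff N i) ((carlitz_T Q ^^ i) x))"

definition carlitz_wieferich_cong :: "nat \<Rightarrow> 'a::comm_ring_1 poly \<Rightarrow> bool" where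
  "carlitz_wieferich_cong Q P \<longleftrightarrow> P ^ 2 dvd carlitz Q (P - 1) 1"

definition c_wieferich :: "'a::{finite,field} poly \<Rightarrow> bool" where
  "c_wieferich P \<longleftrightarrow> lead_coeff P = 1 \<and> irreducible P \<and>
      carlitz_wieferich_cong CARD('a) P"

definition G_fixed :: "'a::comm_ring_1 set \<Rightarrow> 'a poly \<Rightarrow> bool" where
  "G_fixed G f \<longleftrightarrow> (\<forall>a\<in>G. pcompose f [:a, 1:] = f)"

end

theory Submission
  imports Defs "HOL-Number_Theory.Cong"
begin

text \<open>A monic \<open>G\<close>-fixed polynomial of degree \<open>p\<close> is a trinomial \<open>P = T^p - \<alpha>T - b\<close>, where
  \<open>T^p - \<alpha>T = (\<Prod>a\<in>G. T - a)\<close> and \<open>\<alpha>\<close> depends on \<open>G\<close> only. If \<open>P\<close> is irreducible, then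
  \<open>T^q \<equiv> T + g (mod P)\<close> for some nonzero \<open>g \<in> G\<close>, and refining this modulo \<open>P^2\<close> gives
  \<open>T^(q^r) \<equiv> T + rg + Ph\<close> with \<open>\<alpha>h \<equiv> 1 (mod P)\<close>. Modulo \<open>P^2\<close> the Carlitz iterates \<open>\<rho>_T^k(1)\<close>
  are then values of an Appell sequence of homogenised Bell polynomials \<open>B_k\<close>, and \<open>P\<close> turns
  out to be Wieferich over \<open>F_(q^r)[T]\<close> iff \<open>B_p(rg) = \<alpha> + 1\<close> and \<open>B_(p-1)(rg) = \<alpha>\<close>. These
  conditions see \<open>P\<close> only through \<open>rg\<close>: the given Wieferich prime satisfies them with \<open>r = 1\<close> and
  its own \<open>g\<^sub>0\<close>, and \<open>g\<^sub>0 = rg\<close> for some \<open>1 \<le> r \<le> p - 1\<close> because \<open>G = \<bbbF>\<^sub>p g\<close>.\<close>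

lemma of_nat_choose_CHAR_eq_0:
  assumes "CHAR('a::comm_semiring_1) = p" "prime p" "0 < k" "k < p"
  shows "(of_nat (p choose k) :: 'a) = 0"
  using assms by (simp add: of_nat_eq_0_iff_char_dvd dvd_choose_prime)

lemma power_CHAR_power_diff:
  fixes x y :: "'a::comm_ring_1"
  assumes "prime CHAR('a)" "Q = CHAR('a) ^ k"
  shows "(x - y) ^ Q = x ^ Q - y ^ Q"
  using freshmans_dream'[OF assms, of "x - y" y] by (simp add: algebra_simps)

lemma of_nat_power_CHAR:
  assumes "prime CHAR('a::comm_semiring_1)"
  shows "(of_nat m :: 'a) ^ CHAR('a) = of_nat m"
  using freshmans_dream_sum[OF assms refl, of "\<lambda>_. 1" "{..<m}"] by simp

section \<open>Homogenised Bell polynomials\<close>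

text \<open>\<open>bell s n = (\<Sum>k. S(n,k) * s ^ (n - k))\<close> with Stirling numbers \<open>S(n,k)\<close> of the second
  kind, i.e. a homogenised Bell polynomial; \<open>bell_appell s\<close> is the associated Appell sequence.\<close>

fun bell :: "'a::comm_ring_1 \<Rightarrow> nat \<Rightarrow> 'a" where
  "bell s 0 = 1"
| "bell s (Suc n) = (\<Sum>k\<le>n. of_nat (n choose k) * s ^ (n - k) * bell s k)"

definition bell_appell :: "'a::comm_ring_1 \<Rightarrow> nat \<Rightarrow> 'a \<Rightarrow> 'a" where
  "bell_appell s n z = (\<Sum>k\<le>n. of_nat (n choose k) * z ^ (n - k) * bell s k)"

lemma bell_appell_0 [simp]: "bell_appell s 0 z = 1"
  by (simp add: bell_appell_def)

lemma bell_appell_Suc_split: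
  "bell_appell s (Suc n) z =
     z * bell_appell s n z + (\<Sum>k\<le>n. of_nat (n choose k) * z ^ (n - k) * bell s (Suc k))"
proof -
  have "bell_appell s (Suc n) z = z ^ Suc n
      + (\<Sum>k\<le>n. of_nat (n choose k) * z ^ (n - k) * bell s (Suc k))
      + (\<Sum>k\<le>n. of_nat (n choose Suc k) * z ^ (n - k) * bell s (Suc k))"
    unfolding bell_appell_def
    by (subst sum.atMost_Suc_shift) (simp add: sum.distrib distrib_right)
  moreover have "z * bell_appell s n z
      = z ^ Suc n + (\<Sum>k\<le>n. of_nat (n choose Suc k) * z ^ (n - k) * bell s (Suc k))"
  proof -
    have "z * bell_appell s n z = (\<Sum>k\<le>Suc n. of_nat (n choose k) * z ^ (Suc n - k) * bell s k)"
      unfolding bell_appell_def sum_distrib_left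
      by (simp add: Suc_diff_le mult_ac binomial_eq_0)
    also have "\<dots> = z ^ Suc n + (\<Sum>k\<le>n. of_nat (n choose Suc k) * z ^ (n - k) * bell s (Suc k))"
      by (subst sum.atMost_Suc_shift) (simp add: binomial_eq_0)
    finally show ?thesis .
  qed
  ultimately show ?thesis
    by (simp add: add_ac)
qed

lemma bell_appell_shift:
  "bell_appell s n (z + s) = (\<Sum>j\<le>n. of_nat (n choose j) * z ^ (n - j) * bell s (Suc j))"
proof -
  define f where "f k i = of_nat (n choose k) * of_nat ((n - k) choose i) * z ^ i * s ^ (n - k - i) * bell s k"
    for k i
  define g where "g j k = of_nat (n choose j) * of_nat (j choose k) * z ^ (n - j) * s ^ (j - k) * bell s k"
    for j k
  have "bell_appell s n (z + s) = (\<Sum>k\<le>n. \<Sum>i\<le>n - k. f k i)"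
    unfolding bell_appell_def binomial_ring sum_distrib_left sum_distrib_right
    by (intro sum.cong refl) (simp add: f_def mult_ac)
  also have "\<dots> = (\<Sum>(k, i)\<in>(SIGMA k:{..n}. {..n - k}). f k i)"
    by (rule sum.Sigma) auto
  also have "\<dots> = (\<Sum>(j, k)\<in>(SIGMA j:{..n}. {..j}). g j k)"
  proof (rule sum.reindex_bij_witness[where i = "\<lambda>(j, k). (k, n - j)" and j = "\<lambda>(k, i). (n - i, k)"])
    fix a assume "a \<in> (SIGMA k:{..n}. {..n - k})"
    then obtain k i where ki: "a = (k, i)" "k \<le> n" "i \<le> n - k"
      by auto
    have "(n choose (n - i)) * ((n - i) choose k) = (n choose k) * ((n - k) choose (n - i - k))"
      using ki by (intro choose_mult) auto
    also have "(n - k) choose (n - i - k) = (n - k) choose i"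
      using ki by (subst binomial_symmetric) (auto simp: algebra_simps)
    finally have "of_nat (n choose (n - i)) * of_nat ((n - i) choose k)
        = (of_nat (n choose k) * of_nat ((n - k) choose i) :: 'a)"
      by (metis of_nat_mult)
    then show "(case (case a of (k, i) \<Rightarrow> (n - i, k)) of (j, k) \<Rightarrow> g j k) = (case a of (k, i) \<Rightarrow> f k i)"
      using ki unfolding f_def g_def by (simp add: algebra_simps) (metis mult.assoc)
  qed auto
  also have "\<dots> = (\<Sum>j\<le>n. \<Sum>k\<le>j. g j k)"
    by (rule sum.Sigma[symmetric]) auto
  also have "\<dots> = (\<Sum>j\<le>n. of_nat (n choose j) * z ^ (n - j) * bell s (Suc j))"
    by (simp add: g_def sum_distrib_left sum_distrib_right mult_ac)
  finally show ?thesis .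
qed

lemma bell_appell_Suc: "bell_appell s (Suc n) z = bell_appell s n (z + s) + z * bell_appell s n z"
  by (simp add: bell_appell_Suc_split bell_appell_shift)

lemma bell_appell_CHAR:
  fixes s z :: "'a::comm_ring_1"
  assumes "CHAR('a) = p" "prime p"
  shows "bell_appell s p z = z ^ p + bell s p"
proof -
  have "bell_appell s p z = (\<Sum>k\<in>{0, p}. of_nat (p choose k) * z ^ (p - k) * bell s k)"
    unfolding bell_appell_def
    by (rule sum.mono_neutral_right) (use of_nat_choose_CHAR_eq_0[OF assms] in auto)
  then show ?thesis
    using prime_gt_0_nat[OF assms(2)] by simp
qed

lemma sum_power_bell_appell:
  "(\<Sum>j<m. z ^ (m - 1 - j) * bell_appell s j z)
     = (\<Sum>k<m. of_nat (m choose Suc k) * z ^ (m - 1 - k) * bell s k)"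
proof -
  define g where "g j k = of_nat (j choose k) * z ^ (m - 1 - k) * bell s k" for j k
  have "(\<Sum>j<m. z ^ (m - 1 - j) * bell_appell s j z) = (\<Sum>j<m. \<Sum>k | k < m \<and> k \<le> j. g j k)"
  proof (intro sum.cong refl)
    fix j assume j: "j \<in> {..<m}"
    have range: "{k. k < m \<and> k \<le> j} = {..j}"
      using j by auto
    show "z ^ (m - 1 - j) * bell_appell s j z = (\<Sum>k | k < m \<and> k \<le> j. g j k)"
      unfolding range bell_appell_def g_def sum_distrib_left
    proof (intro sum.cong refl)
      fix k assume "k \<in> {..j}"
      then have "z ^ (m - 1 - j) * z ^ (j - k) = z ^ (m - 1 - k)"
        using j by (simp flip: power_add)
      then show "z ^ (m - 1 - j) * (of_nat (j choose k) * z ^ (j - k) * bell s k)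
          = of_nat (j choose k) * z ^ (m - 1 - k) * bell s k"
        by (metis mult.assoc mult.left_commute)
    qed
  qed
  also have "\<dots> = (\<Sum>k<m. \<Sum>j | j < m \<and> k \<le> j. g j k)"
    using sum.swap_restrict[of "{..<m}" "{..<m}" g "\<lambda>j k. k \<le> j"] by simp
  also have "\<dots> = (\<Sum>k<m. of_nat (m choose Suc k) * z ^ (m - 1 - k) * bell s k)"
  proof (intro sum.cong refl)
    fix k assume k: "k \<in> {..<m}"
    then have "m > 0"
      by simp
    have "(\<Sum>j | j < m \<and> k \<le> j. j choose k) = (\<Sum>j\<le>m - 1. j choose k)"
      by (rule sum.mono_neutral_left) (use k in auto)
    also have "\<dots> = m choose Suc k"
      using sum_choose_upper[of k "m - 1"] \<open>m > 0\<close> by simp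
    finally show "(\<Sum>j | j < m \<and> k \<le> j. g j k) = of_nat (m choose Suc k) * z ^ (m - 1 - k) * bell s k"
      unfolding g_def by (simp flip: sum_distrib_right of_nat_sum)
  qed
  finally show ?thesis .
qed

lemma sum_bell_appell_CHAR:
  fixes s z :: "'a::comm_ring_1"
  assumes "CHAR('a) = p" "prime p"
  shows "(\<Sum>j<p. z ^ (p - 1 - j) * bell_appell s j z) = bell s (p - 1)"
proof -
  have p0: "p > 0"
    using assms prime_gt_0_nat by blast
  have "(\<Sum>j<p. z ^ (p - 1 - j) * bell_appell s j z)
      = (\<Sum>k\<in>{p - 1}. of_nat (p choose Suc k) * z ^ (p - 1 - k) * bell s k)"
    unfolding sum_power_bell_appell
  proof (rule sum.mono_neutral_right)
    show "\<forall>i\<in>{..<p} - {p - 1}. of_nat (p choose Suc i) * z ^ (p - 1 - i) * bell s i = 0"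
    proof
      fix i assume "i \<in> {..<p} - {p - 1}"
      then have "0 < Suc i" "Suc i < p"
        by auto
      then show "of_nat (p choose Suc i) * z ^ (p - 1 - i) * bell s i = 0"
        using of_nat_choose_CHAR_eq_0[OF assms] by simp
    qed
  qed (use p0 in auto)
  then show ?thesis
    using p0 by simp
qed

lemma bell_const_poly: "bell [:s:] k = [:bell s k:]"
proof (induction k rule: less_induct)
  case (less k)
  show ?case
  proof (cases k)
    case (Suc m)
    have "bell [:s:] k = (\<Sum>j\<le>m. [:of_nat (m choose j) * s ^ (m - j) * bell s j:])"
      unfolding Suc bell.simps
      by (intro sum.cong refl) (use Suc less in \<open>simp add: of_nat_poly poly_const_pow\<close>)
    then show ?thesis
      unfolding sum_to_poly Suc by simp
  qed (simp add: one_pCons)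
qed

lemma bell_appell_power_CHAR_power:
  fixes z :: "'a::field poly"
  assumes "CHAR('a) = p" "prime p" "Q = p ^ k" "\<And>c::'a. c ^ Q = c"
  shows "bell_appell [:s:] n z ^ Q = bell_appell [:s:] n (z ^ Q)"
proof -
  have const: "[:c:] ^ Q = [:c:]" for c :: 'a
    by (simp add: poly_const_pow assms(4))
  have "bell_appell [:s:] n z ^ Q = (\<Sum>j\<le>n. (of_nat (n choose j) * z ^ (n - j) * bell [:s:] j) ^ Q)"
    unfolding bell_appell_def by (rule freshmans_dream_sum') (use assms in simp_all)
  also have "\<dots> = bell_appell [:s:] n (z ^ Q)"
    unfolding bell_appell_def
  proof (intro sum.cong refl)
    fix j
    have "(of_nat (n choose j) :: 'a poly) ^ Q = of_nat (n choose j)"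
      by (simp add: of_nat_poly const)
    moreover have "(z ^ (n - j)) ^ Q = (z ^ Q) ^ (n - j)"
      by (simp add: mult.commute flip: power_mult)
    ultimately show "(of_nat (n choose j) * z ^ (n - j) * bell [:s:] j) ^ Q
        = of_nat (n choose j) * (z ^ Q) ^ (n - j) * bell [:s:] j"
      by (simp only: power_mult_distrib bell_const_poly const)
  qed
  finally show ?thesis .
qed

lemma bell_appell_cong:
  fixes x y :: "'a::unique_euclidean_ring"
  shows "[x = y] (mod M) \<Longrightarrow> [bell_appell s n x = bell_appell s n y] (mod M)"
  unfolding bell_appell_def by (intro cong_sum cong_mult cong_pow cong_refl)

section \<open>The Carlitz module modulo \<open>P\<^sup>2\<close>\<close>

lemma carlitz_T_cong:
  "[x = y] (mod M) \<Longrightarrow> [carlitz_T Q x = carlitz_T Q (y :: 'a::field poly)] (mod M)"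
  unfolding carlitz_T_def by (intro cong_add cong_mult cong_pow cong_refl)

lemma carlitz_trinomial:
  fixes \<alpha> \<beta> :: "'a::field"
  assumes "p \<ge> 2"
  shows "carlitz Q (monom 1 p - monom \<alpha> 1 - monom \<beta> 0) x
     = (carlitz_T Q ^^ p) x - smult \<alpha> (carlitz_T Q x) - smult \<beta> x"
proof -
  let ?N = "monom 1 p - monom \<alpha> 1 - monom \<beta> 0 :: 'a poly"
  have coeff_N: "coeff ?N i = (if i = p then 1 else 0) - (if i = 1 then \<alpha> else 0) - (if i = 0 then \<beta> else 0)"
    for i
    by (simp add: coeff_monom)
  have "degree ?N = p"
  proof (rule order_antisym)
    show "degree ?N \<le> p"
      by (intro degree_le allI impI) (use assms in \<open>simp add: coeff_N\<close>)
    show "p \<le> degree ?N"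
      by (rule le_degree) (use assms in \<open>simp add: coeff_N\<close>)
  qed
  then show ?thesis
    using assms unfolding carlitz_def coeff_N
    by (simp add: smult_diff_left sum_subtractf if_distrib[of "\<lambda>c. smult c _"] cong: if_cong)
qed

lemma carlitz_trinomial_minus_1:
  fixes \<alpha> b :: "'a::field"
  assumes "p \<ge> 2" "P = [:0, 1:] ^ p - [:\<alpha>:] * [:0, 1:] - [:b:]"
  shows "carlitz Q (P - 1) 1 = (carlitz_T Q ^^ p) 1 - [:\<alpha>:] * ([:0, 1:] + 1) - ([:b:] + 1)"
proof -
  have P_minus_1: "P - 1 = monom 1 p - monom \<alpha> 1 - monom (b + 1) 0"
    unfolding assms(2) by (simp add: monom_altdef algebra_simps one_pCons)
  have "carlitz_T Q 1 = [:0, 1:] + (1 :: 'a poly)"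
    by (simp add: carlitz_T_def)
  then show ?thesis
    unfolding P_minus_1 carlitz_trinomial[OF assms(1)] by (simp add: one_pCons)
qed

text \<open>Since \<open>\<theta>\<^sup>Q \<equiv> \<theta> + s\<close>, the Frobenius part of \<open>\<rho>\<^sub>T\<close> shifts the argument of the Appell
  polynomials, and \<open>bell_appell_Suc\<close> is exactly the resulting recurrence.\<close>

lemma carlitz_T_bell_appell_mod_sq:
  fixes P h w :: "'a::field poly" and s :: 'a
  assumes "CHAR('a) = p" "prime p" "Q = p ^ k" "k > 0" "\<And>c::'a. c ^ Q = c"
    and \<theta>_pow_Q: "[\<theta> ^ Q = \<theta> + [:s:]] (mod P ^ 2)" and \<theta>: "\<theta> = [:0, 1:] + P * h"
  shows "[carlitz_T Q (bell_appell [:s:] n \<theta> - P * h * w)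
           = bell_appell [:s:] (Suc n) \<theta> - P * h * (\<theta> * w + bell_appell [:s:] n \<theta>)] (mod P ^ 2)"
proof -
  define u where "u = bell_appell [:s:] n \<theta>"
  have char: "prime CHAR('a poly)" "Q = CHAR('a poly) ^ k"
    using assms by simp_all
  have "P ^ 2 dvd P ^ Q"
    using one_less_power[OF prime_gt_1_nat[OF assms(2)] assms(4)] assms(3)
    by (intro le_imp_power_dvd) simp
  then have P_pow_Q: "[P ^ Q * (h * w) ^ Q = 0] (mod P ^ 2)"
    by (simp add: cong_0_iff)
  have "carlitz_T Q (u - P * h * w)
      = u ^ Q + \<theta> * u - P * h * (u + \<theta> * w) + (P ^ 2 * (h ^ 2 * w) - P ^ Q * (h * w) ^ Q)"
    unfolding carlitz_T_def power_CHAR_power_diff[OF char]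
    by (simp add: \<theta> power_mult_distrib power2_eq_square algebra_simps)
  also have "[\<dots> = bell_appell [:s:] n (\<theta> + [:s:]) + \<theta> * u - P * h * (u + \<theta> * w) + (0 - 0)] (mod P ^ 2)"
  proof (intro cong_add cong_diff cong_refl P_pow_Q)
    show "[u ^ Q = bell_appell [:s:] n (\<theta> + [:s:])] (mod P ^ 2)"
      unfolding u_def bell_appell_power_CHAR_power[OF assms(1-3,5)]
      by (rule bell_appell_cong[OF \<theta>_pow_Q])
    show "[P ^ 2 * (h ^ 2 * w) = 0] (mod P ^ 2)"
      by (simp add: cong_0_iff)
  qed
  also have "bell_appell [:s:] n (\<theta> + [:s:]) + \<theta> * u - P * h * (u + \<theta> * w) + (0 - 0)
      = bell_appell [:s:] (Suc n) \<theta> - P * h * (\<theta> * w + u)"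
    by (simp add: u_def bell_appell_Suc algebra_simps)
  finally show ?thesis
    by (simp only: u_def)
qed

lemma carlitz_T_iterate_mod_sq:
  fixes P h :: "'a::field poly" and s :: 'a
  assumes "CHAR('a) = p" "prime p" "Q = p ^ k" "k > 0" "\<And>c::'a. c ^ Q = c"
    and X_pow_Q: "[[:0, 1:] ^ Q = [:0, 1:] + [:s:] + P * h] (mod P ^ 2)"
  defines "\<theta> \<equiv> [:0, 1:] + P * h"
  shows "[(carlitz_T Q ^^ n) 1 = bell_appell [:s:] n \<theta>
           - P * h * (\<Sum>j<n. \<theta> ^ (n - 1 - j) * bell_appell [:s:] j \<theta>)] (mod P ^ 2)"
proof -
  define w where "w n = (\<Sum>j<n. \<theta> ^ (n - 1 - j) * bell_appell [:s:] j \<theta>)" for n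
  have char: "prime CHAR('a poly)" "Q = CHAR('a poly) ^ k"
    using assms by simp_all
  have "P ^ 2 dvd P ^ Q * h ^ Q"
    using one_less_power[OF prime_gt_1_nat[OF assms(2)] assms(4)] assms(3)
    by (intro dvd_mult2 le_imp_power_dvd) simp
  then have "[\<theta> ^ Q = [:0, 1:] ^ Q] (mod P ^ 2)"
    unfolding cong_iff_dvd_diff \<theta>_def freshmans_dream'[OF char] power_mult_distrib by simp
  also note X_pow_Q
  finally have \<theta>_pow_Q: "[\<theta> ^ Q = \<theta> + [:s:]] (mod P ^ 2)"
    by (simp add: \<theta>_def algebra_simps)
  have w_Suc: "w (Suc n) = \<theta> * w n + bell_appell [:s:] n \<theta>" for n
  proof -
    have "\<theta> ^ (Suc n - 1 - j) = \<theta> * \<theta> ^ (n - 1 - j)" if "j < n" for j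
      using that by (simp flip: power_Suc add: Suc_diff_Suc)
    then show ?thesis
      unfolding w_def by (simp add: sum_distrib_left mult.assoc)
  qed
  show ?thesis
    unfolding w_def [symmetric]
  proof (induction n)
    case 0
    show ?case
      by (simp add: w_def)
  next
    case (Suc n)
    have "[(carlitz_T Q ^^ Suc n) 1 = carlitz_T Q (bell_appell [:s:] n \<theta> - P * h * w n)] (mod P ^ 2)"
      using carlitz_T_cong[OF Suc.IH] by simp
    also have "[carlitz_T Q (bell_appell [:s:] n \<theta> - P * h * w n)
        = bell_appell [:s:] (Suc n) \<theta> - P * h * w (Suc n)] (mod P ^ 2)"
      unfolding w_Suc by (rule carlitz_T_bell_appell_mod_sq[OF assms(1-5) \<theta>_pow_Q \<theta>_def[THEN meta_eq_to_obj_eq]])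
    finally show ?case .
  qed
qed

lemma carlitz_T_iterate_CHAR_mod_sq:
  fixes P h :: "'a::field poly" and s :: 'a
  assumes "CHAR('a) = p" "prime p" "Q = p ^ k" "k > 0" "\<And>c::'a. c ^ Q = c"
    and "[[:0, 1:] ^ Q = [:0, 1:] + [:s:] + P * h] (mod P ^ 2)"
  defines "\<theta> \<equiv> [:0, 1:] + P * h"
  shows "[(carlitz_T Q ^^ p) 1 = \<theta> ^ p + [:bell s p:] - P * h * [:bell s (p - 1):]] (mod P ^ 2)"
proof -
  have char: "CHAR('a poly) = p"
    using assms(1) by simp
  show ?thesis
    using carlitz_T_iterate_mod_sq[OF assms(1-6), of p]
    unfolding \<theta>_def bell_appell_CHAR[OF char assms(2)] sum_bell_appell_CHAR[OF char assms(2)]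
    by (simp add: bell_const_poly)
qed

lemma carlitz_minus_one_mod_sq:
  fixes P h :: "'a::field poly" and \<alpha> b s :: 'a
  assumes "CHAR('a) = p" "prime p" "Q = p ^ k" "k > 0" "\<And>c::'a. c ^ Q = c"
    and P: "P = [:0, 1:] ^ p - [:\<alpha>:] * [:0, 1:] - [:b:]"
    and X_pow_Q: "[[:0, 1:] ^ Q = [:0, 1:] + [:s:] + P * h] (mod P ^ 2)"
    and inverse: "[[:\<alpha>:] * h = 1] (mod P)"
  shows "[carlitz Q (P - 1) 1 = [:bell s p - \<alpha> - 1:] - P * h * [:bell s (p - 1) - \<alpha>:]] (mod P ^ 2)"
proof -
  define X A B Bp Bq where "X = ([:0, 1:] :: 'a poly)" and "A = [:\<alpha>:]" and "B = [:b:]"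
    and "Bp = [:bell s p:]" and "Bq = [:bell s (p - 1):]"
  define \<theta> where "\<theta> = X + P * h"
  have p2: "p \<ge> 2"
    using assms(2) prime_ge_2_nat by blast
  have "carlitz Q (P - 1) 1 = (carlitz_T Q ^^ p) 1 - A * (X + 1) - (B + 1)"
    unfolding A_def B_def X_def by (rule carlitz_trinomial_minus_1[OF p2 P])
  moreover have "[(carlitz_T Q ^^ p) 1 = \<theta> ^ p + Bp - P * h * Bq] (mod P ^ 2)"
    using carlitz_T_iterate_CHAR_mod_sq[OF assms(1-5) X_pow_Q]
    unfolding \<theta>_def X_def Bp_def Bq_def .
  ultimately have "[carlitz Q (P - 1) 1 = (\<theta> ^ p + Bp - P * h * Bq) - A * (X + 1) - (B + 1)] (mod P ^ 2)"
    by (simp add: cong_diff)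
  moreover have "\<theta> ^ p = P + A * X + B + P ^ p * h ^ p"
  proof -
    have "(X + P * h) ^ p = X ^ p + (P * h) ^ p"
      by (rule freshmans_dream) (simp_all add: assms(1,2))
    then have "\<theta> ^ p = X ^ p + P ^ p * h ^ p"
      by (simp add: \<theta>_def power_mult_distrib)
    moreover have "X ^ p = P + A * X + B"
      unfolding P X_def A_def B_def by simp
    ultimately show ?thesis
      by simp
  qed
  ultimately have "[carlitz Q (P - 1) 1 = (Bp - A - 1 - P * h * (Bq - A)) + (P * (1 - A * h) + P ^ p * h ^ p)] (mod P ^ 2)"
    by (simp add: algebra_simps)
  moreover have "[P * (1 - A * h) + P ^ p * h ^ p = 0] (mod P ^ 2)"
  proof -
    have "P dvd 1 - A * h"
      using inverse by (simp add: A_def cong_iff_dvd_diff dvd_diff_commute)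
    then have "P ^ 2 dvd P * (1 - A * h)"
      by (simp add: power2_eq_square)
    moreover have "P ^ 2 dvd P ^ p * h ^ p"
      using p2 by (intro dvd_mult2 le_imp_power_dvd)
    ultimately show ?thesis
      by (simp add: cong_0_iff)
  qed
  ultimately have "[carlitz Q (P - 1) 1 = Bp - A - 1 - P * h * (Bq - A)] (mod P ^ 2)"
    using cong_add_lcancel_0 cong_trans by blast
  then show ?thesis
    by (simp add: A_def Bp_def Bq_def one_pCons)
qed

lemma prime_elem_sq_dvd_const_minus_mult_iff:
  fixes P h :: "'a::field poly"
  assumes "prime_elem P" "\<not> P dvd h"
  shows "P ^ 2 dvd [:c:] - P * h * [:d:] \<longleftrightarrow> c = 0 \<and> d = 0"
proof
  have const_dvd: "e = 0" if "P dvd [:e:]" for e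
  proof (rule ccontr)
    assume "e \<noteq> 0"
    then have "is_unit P"
      using that by (auto simp: is_unit_triv intro: dvd_unit_imp_unit)
    then show False
      using assms(1) prime_elem_not_unit by blast
  qed
  assume sq_dvd: "P ^ 2 dvd [:c:] - P * h * [:d:]"
  then have "P dvd [:c:] - P * h * [:d:] + P * h * [:d:]"
    by (intro dvd_add dvd_mult2) (auto simp: power2_eq_square intro: dvd_mult_left)
  then have c: "c = 0"
    by (simp add: const_dvd)
  with sq_dvd have "P ^ 2 dvd smult d (P * h)"
    by simp
  moreover have "\<not> P ^ 2 dvd P * h"
    using assms by (simp add: power2_eq_square)
  ultimately have "d = 0"
    using dvd_smult_cancel by blast
  with c show "c = 0 \<and> d = 0" ..
qed simp

theorem carlitz_wieferich_cong_iff_bell: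
  fixes P h :: "'a::field poly" and \<alpha> b s :: 'a
  assumes "CHAR('a) = p" "prime p" "Q = p ^ k" "k > 0" "\<And>c::'a. c ^ Q = c"
    and "P = [:0, 1:] ^ p - [:\<alpha>:] * [:0, 1:] - [:b:]" "prime_elem P"
    and "[[:0, 1:] ^ Q = [:0, 1:] + [:s:] + P * h] (mod P ^ 2)"
    and inverse: "[[:\<alpha>:] * h = 1] (mod P)"
  shows "carlitz_wieferich_cong Q P \<longleftrightarrow> bell s p = \<alpha> + 1 \<and> bell s (p - 1) = \<alpha>"
proof -
  have "\<not> P dvd h"
  proof
    assume "P dvd h"
    then have "P dvd [:\<alpha>:] * h"
      by (rule dvd_mult)
    then have "P dvd 1"
      using cong_dvd_iff[OF inverse] by blast
    then show False
      using \<open>prime_elem P\<close> prime_elem_not_unit by blast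
  qed
  have "carlitz_wieferich_cong Q P
      \<longleftrightarrow> P ^ 2 dvd [:bell s p - \<alpha> - 1:] - P * h * [:bell s (p - 1) - \<alpha>:]"
    unfolding carlitz_wieferich_cong_def
    by (rule cong_dvd_iff[OF carlitz_minus_one_mod_sq[OF assms(1-6,8,9)]])
  also have "\<dots> \<longleftrightarrow> bell s p - \<alpha> - 1 = 0 \<and> bell s (p - 1) - \<alpha> = 0"
    by (rule prime_elem_sq_dvd_const_minus_mult_iff) fact+
  finally show ?thesis
    by (simp add: algebra_simps)
qed

lemma of_nat_CARD_eq_0: "(of_nat CARD('a::{finite,ring_1}) :: 'a) = 0"
proof -
  have "(\<Sum>x\<in>UNIV. x + 1) = (\<Sum>x\<in>UNIV. x :: 'a)"
    by (rule sum.reindex_bij_witness[where i = "\<lambda>x. x - 1" and j = "\<lambda>x. x + 1"]) auto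
  then show ?thesis
    by (simp add: sum.distrib)
qed

lemma CHAR_eq_of_CARD_eq_prime_power:
  assumes "prime p" "n > 0" "CARD('a::{finite,field}) = p ^ n"
  shows "CHAR('a) = p"
proof -
  have "prime CHAR('a)"
    by (intro prime_CHAR_semidom finite_imp_CHAR_pos) auto
  moreover have "CHAR('a) dvd p ^ n"
    using of_nat_CARD_eq_0[where 'a = 'a] unfolding assms(3) of_nat_eq_0_iff_char_dvd .
  ultimately show ?thesis
    using assms(1) prime_dvd_power primes_dvd_imp_eq by blast
qed

lemma power_CARD_eq_self: "x ^ CARD('a) = (x :: 'a::{finite,field})"
proof (cases "x = 0")
  case False
  let ?U = "UNIV - {0 :: 'a}"
  have "x ^ card ?U * (\<Prod>y\<in>?U. y) = (\<Prod>y\<in>?U. x * y)"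
    by (simp add: prod.distrib)
  also have "\<dots> = (\<Prod>y\<in>?U. y)"
    by (rule prod.reindex_bij_witness[where i = "\<lambda>y. y / x" and j = "\<lambda>y. x * y"]) (use False in auto)
  finally have "x ^ card ?U = 1"
    by simp
  moreover have "CARD('a) = Suc (card ?U)"
    using card_Suc_Diff1[of UNIV "0 :: 'a"] by simp
  ultimately show ?thesis
    by (simp only: power_Suc mult_1_right)
qed (simp add: finite_UNIV_card_ge_0)

lemma power_CARD_power_eq_self: "x ^ (CARD('a) ^ r) = (x :: 'a::{finite,field})"
  by (induction r) (simp_all add: power_CARD_eq_self power_mult)

lemma prime_elem_dvd_prod:
  assumes "prime_elem P" "finite A" "P dvd prod f A"
  shows "\<exists>x\<in>A. P dvd f x"
  using assms(2,3)
proof (induction A rule: finite_induct)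
  case empty
  then show ?case
    using prime_elem_not_unit[OF assms(1)] by simp
next
  case (insert x A)
  then show ?case
    using prime_elem_dvd_mult_iff[OF assms(1)] by auto
qed

lemma prod_linear_factors_eqI:
  fixes f :: "'a::field poly"
  assumes "finite A" "card A = n" "degree f \<le> n" "coeff f n = 1" "\<And>z. z \<in> A \<Longrightarrow> poly f z = 0"
  shows "(\<Prod>a\<in>A. [:-a, 1:]) = f"
proof (rule poly_eqI_degree_lead_coeff[where A = A and n = n])
  have "degree (\<Prod>a\<in>A. [:-a, 1:]) = n"
    using assms(1,2) by (subst degree_prod_eq_sum_degree) auto
  moreover have "lead_coeff (\<Prod>a\<in>A. [:-a, 1:]) = 1"
    by (simp add: lead_coeff_prod)
  ultimately show "coeff (\<Prod>a\<in>A. [:-a, 1:]) n = coeff f n" "degree (\<Prod>a\<in>A. [:-a, 1:]) \<le> n"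
    using assms(4) by simp_all
qed (use assms in \<open>auto simp: poly_prod\<close>)

lemma coeff_X_pow_minus_linear:
  "coeff ([:0, 1:] ^ n - [:0, \<alpha>:]) i = (if i = n then 1 else 0) - (if i = 1 then \<alpha> else 0)"
  by (simp add: monom_altdef[symmetric] coeff_monom coeff_pCons split: nat.split)

lemma degree_X_pow_minus_linear:
  fixes \<alpha> :: "'a::comm_ring_1"
  assumes "n \<ge> 2"
  shows "degree ([:0, 1:] ^ n - [:0, \<alpha>:]) = n"
proof (rule order_antisym)
  show "degree ([:0, 1:] ^ n - [:0, \<alpha>:]) \<le> n"
    by (intro degree_le allI impI) (use assms in \<open>simp only: coeff_X_pow_minus_linear, simp\<close>)
  show "n \<le> degree ([:0, 1:] ^ n - [:0, \<alpha>:])"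
    by (rule le_degree) (use assms in \<open>simp only: coeff_X_pow_minus_linear, simp\<close>)
qed

lemma prod_UNIV_linear_factors:
  assumes "CARD('a::{finite,field}) \<ge> 2"
  shows "(\<Prod>a\<in>(UNIV :: 'a set). [:-a, 1:]) = [:0, 1:] ^ CARD('a) - [:0, 1:]"
proof (rule prod_linear_factors_eqI)
  show "degree ([:0, 1:] ^ CARD('a) - [:0, 1:] :: 'a poly) \<le> CARD('a)"
    using degree_X_pow_minus_linear[OF assms, of "1 :: 'a"] by simp
  show "coeff ([:0, 1:] ^ CARD('a) - [:0, 1:] :: 'a poly) CARD('a) = 1"
    using coeff_X_pow_minus_linear[of "CARD('a)" "1 :: 'a" "CARD('a)"] assms by simp
  show "poly ([:0, 1:] ^ CARD('a) - [:0, 1:]) z = 0" for z :: 'a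
    by (simp add: power_CARD_eq_self)
qed auto

lemma prime_elem_not_dvd_X_pow_CARD_minus_X:
  fixes P :: "'a::{finite,field} poly"
  assumes "prime_elem P" "degree P \<ge> 2" "CARD('a) \<ge> 2"
  shows "\<not> P dvd [:0, 1:] ^ CARD('a) - [:0, 1:]"
proof
  assume "P dvd [:0, 1:] ^ CARD('a) - [:0, 1:]"
  then have "P dvd (\<Prod>a\<in>(UNIV :: 'a set). [:-a, 1:])"
    unfolding prod_UNIV_linear_factors[OF assms(3)] .
  then obtain a where "P dvd [:-a, 1:]"
    using prime_elem_dvd_prod[OF assms(1) finite] by blast
  then have "degree P \<le> degree [:-a, 1:]"
    by (rule dvd_imp_degree_le) simp
  with assms(2) show False
    by simp
qed

lemma pcompose_X_power: "pcompose ([:0, 1:] ^ k) q = (q :: 'a::comm_ring_1 poly) ^ k"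
  by (induction k) (simp_all add: pcompose_mult pcompose_pCons pcompose_1)

section \<open>Additive subgroups of order \<open>p\<close>\<close>

locale prime_order_subgroup =
  fixes G :: "'a::{finite,field} set" and p n :: nat
  assumes prime: "prime p" and n_pos: "n > 0" and CARD_eq: "CARD('a) = p ^ n"
    and zero_mem: "0 \<in> G" and add_mem: "\<And>a b. a \<in> G \<Longrightarrow> b \<in> G \<Longrightarrow> a + b \<in> G"
    and card_G: "card G = p"
begin

lemma CHAR_eq: "CHAR('a) = p"
  using CHAR_eq_of_CARD_eq_prime_power[OF prime n_pos CARD_eq] .

lemma p_ge_2: "p \<ge> 2"
  using prime prime_ge_2_nat by blast

lemma CARD_ge_p: "CARD('a) \<ge> p"
  using n_pos prime_gt_0_nat[OF prime] power_increasing[of 1 n p] by (simp add: CARD_eq)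

lemma poly_add_power_p: "(x + y :: 'a poly) ^ p = x ^ p + y ^ p"
  by (rule freshmans_dream) (simp_all add: CHAR_eq prime)

lemma poly_diff_power_p: "(x - y :: 'a poly) ^ p = x ^ p - y ^ p"
  by (rule power_CHAR_power_diff[where k = 1]) (simp_all add: CHAR_eq prime)

lemma poly_add_power_CARD: "(x + y :: 'a poly) ^ CARD('a) = x ^ CARD('a) + y ^ CARD('a)"
  by (rule freshmans_dream') (simp_all add: CHAR_eq prime CARD_eq)

lemma poly_diff_power_CARD: "(x - y :: 'a poly) ^ CARD('a) = x ^ CARD('a) - y ^ CARD('a)"
  by (rule power_CHAR_power_diff[where k = n]) (simp_all add: CHAR_eq prime CARD_eq)

lemma of_nat_mult_mem: "g \<in> G \<Longrightarrow> of_nat m * g \<in> G"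
  by (induction m) (auto simp: zero_mem distrib_right intro: add_mem)

lemma G_eq_multiples:
  assumes "g \<in> G" "g \<noteq> 0"
  shows "G = (\<lambda>m. of_nat m * g) ` {..<p}"
proof -
  have "inj_on (\<lambda>m. of_nat m * g) {..<p}"
  proof (rule inj_onI)
    fix x y assume "x \<in> {..<p}" "y \<in> {..<p}" "of_nat x * g = of_nat y * g"
    then show "x = y"
      using assms(2) CHAR_eq by (auto simp: of_nat_eq_iff_cong_CHAR cong_less_modulus_unique_nat)
  qed
  then have "card ((\<lambda>m. of_nat m * g) ` {..<p}) = card G"
    by (simp add: card_image card_G)
  moreover have "(\<lambda>m. of_nat m * g) ` {..<p} \<subseteq> G"
    using of_nat_mult_mem assms(1) by auto
  ultimately show ?thesis
    by (metis card_subset_eq finite)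
qed

lemma ex_nonzero_mem: "\<exists>g. g \<in> G \<and> g \<noteq> 0"
proof (rule ccontr)
  assume "\<not> ?thesis"
  then have "G \<subseteq> {0}"
    by auto
  then have "card G \<le> 1"
    using card_mono[of "{0}" G] by simp
  then show False
    using card_G p_ge_2 by simp
qed

definition alpha :: 'a where
  "alpha = (SOME g. g \<in> G \<and> g \<noteq> 0) ^ (p - 1)"

lemma power_p_eq: "x \<in> G \<Longrightarrow> x ^ p = alpha * x"
proof -
  define g where "g = (SOME g. g \<in> G \<and> g \<noteq> 0)"
  have g: "g \<in> G" "g \<noteq> 0"
    using someI_ex[OF ex_nonzero_mem] unfolding g_def by auto
  assume "x \<in> G"
  then obtain m where x: "x = of_nat m * g"
    using G_eq_multiples[OF g] by auto
  have "(of_nat m :: 'a) ^ p = of_nat m"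
    using of_nat_power_CHAR[where 'a = 'a, of m] CHAR_eq prime by simp
  moreover have "g ^ p = g ^ (p - 1) * g"
    using p_ge_2 by (simp flip: power_Suc2)
  ultimately show "x ^ p = alpha * x"
    by (simp add: x alpha_def g_def[symmetric] power_mult_distrib mult_ac)
qed

lemma prod_G_linear_factors: "(\<Prod>a\<in>G. [:-a, 1:]) = [:0, 1:] ^ p - [:alpha:] * [:0, 1:]"
proof (rule prod_linear_factors_eqI)
  show "degree ([:0, 1:] ^ p - [:alpha:] * [:0, 1:]) \<le> p"
    using degree_X_pow_minus_linear[OF p_ge_2, of alpha] by simp
  show "coeff ([:0, 1:] ^ p - [:alpha:] * [:0, 1:]) p = 1"
    using coeff_X_pow_minus_linear[of p alpha p] p_ge_2 by simp
  show "poly ([:0, 1:] ^ p - [:alpha:] * [:0, 1:]) z = 0" if "z \<in> G" for z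
    using power_p_eq[OF that] by simp
qed (simp_all add: card_G)

lemma prod_G_shifts: "(\<Prod>a\<in>G. q - [:a:]) = q ^ p - [:alpha:] * q"
proof -
  have "(\<Prod>a\<in>G. q - [:a:]) = pcompose (\<Prod>a\<in>G. [:-a, 1:]) q"
    unfolding pcompose_prod by (intro prod.cong refl) (simp add: pcompose_pCons)
  also have "\<dots> = q ^ p - [:alpha:] * q"
    unfolding prod_G_linear_factors by (simp add: pcompose_diff pcompose_mult pcompose_X_power pcompose_pCons)
  finally show ?thesis .
qed

lemma G_fixed_imp_trinomial:
  assumes "lead_coeff P = 1" "degree P = p" "G_fixed G P"
  shows "P = [:0, 1:] ^ p - [:alpha:] * [:0, 1:] - [:- coeff P 0:]"
proof -
  let ?f = "[:0, 1:] ^ p - [:alpha:] * [:0, 1:] + [:coeff P 0:]"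
  have "P = ?f"
  proof (rule poly_eqI_degree_lead_coeff[where A = G and n = p])
    show "coeff P p = coeff ?f p"
      using assms(1,2) coeff_X_pow_minus_linear[of p alpha p] p_ge_2
      by (simp add: coeff_pCons split: nat.split)
    show "degree ?f \<le> p"
      using degree_X_pow_minus_linear[OF p_ge_2, of alpha] by (simp add: degree_add_le)
    show "poly P z = poly ?f z" if "z \<in> G" for z
    proof -
      have "poly P z = poly (pcompose P [:z, 1:]) 0"
        by (simp add: poly_pcompose)
      also have "\<dots> = coeff P 0"
        using assms(3) that by (simp add: G_fixed_def poly_0_coeff_0)
      finally show ?thesis
        using power_p_eq[OF that] by simp
    qed
  qed (use assms card_G in simp_all)
  also have "[:coeff P 0:] = - [:- coeff P 0:]"
    by simp
  finally show ?thesis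
    by (simp only: add_uminus_conv_diff)
qed

lemma trinomial_power_CARD:
  fixes b c :: 'a
  shows "([:0, 1:] ^ p - [:c:] * [:0, 1:] - [:b:]) ^ CARD('a)
     = ([:0, 1:] ^ CARD('a)) ^ p - [:c:] * [:0, 1:] ^ CARD('a) - [:b:]"
proof -
  have const: "[:a:] ^ CARD('a) = [:a:]" for a :: 'a
    by (simp add: poly_const_pow power_CARD_eq_self)
  show ?thesis
    unfolding poly_diff_power_CARD
    by (simp only: const power_mult_distrib mult.commute flip: power_mult)
qed

lemma X_pow_CARD_mod_G_shift:
  assumes P: "P = [:0, 1:] ^ p - [:alpha:] * [:0, 1:] - [:b:]" and "prime_elem P"
  shows "\<exists>g\<in>G. P dvd [:0, 1:] ^ CARD('a) - [:0, 1:] - [:g:]"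
proof -
  define X where "X = ([:0, 1:] :: 'a poly)"
  have P_pow: "P ^ CARD('a) = (X ^ CARD('a)) ^ p - [:alpha:] * X ^ CARD('a) - [:b:]"
    unfolding P X_def by (rule trinomial_power_CARD)
  have "P dvd P ^ CARD('a) - P"
    using CARD_ge_p p_ge_2 by (intro dvd_diff dvd_power) auto
  also have "P ^ CARD('a) - P = (X ^ CARD('a) - X) ^ p - [:alpha:] * (X ^ CARD('a) - X)"
    unfolding P_pow poly_diff_power_p by (simp add: P X_def algebra_simps)
  also have "\<dots> = (\<Prod>g\<in>G. X ^ CARD('a) - X - [:g:])"
    by (simp add: prod_G_shifts)
  finally have "P dvd (\<Prod>g\<in>G. X ^ CARD('a) - X - [:g:])" .
  then show ?thesis
    unfolding X_def using prime_elem_dvd_prod[OF \<open>prime_elem P\<close> finite] by blast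
qed

lemma X_pow_CARD_power_mod_sq:
  fixes P h :: "'a poly"
  assumes X_pow_CARD: "[:0, 1:] ^ CARD('a) = [:0, 1:] + [:g:] + P * h" and "r > 0"
  shows "[[:0, 1:] ^ (CARD('a) ^ r) = [:0, 1:] + [:of_nat r * g:] + P * h] (mod P ^ 2)"
  using \<open>r > 0\<close>
proof (induction r rule: nat_induct_non_zero)
  case 1
  show ?case
    using X_pow_CARD by simp
next
  case (Suc r)
  have "P ^ 2 dvd P ^ CARD('a) * h ^ CARD('a)"
    using CARD_ge_p p_ge_2 by (intro dvd_mult2 le_imp_power_dvd) simp
  then have P_pow: "[P ^ CARD('a) * h ^ CARD('a) = 0] (mod P ^ 2)"
    by (simp add: cong_0_iff)
  have "[:0, 1:] ^ (CARD('a) ^ Suc r) = ([:0, 1:] ^ (CARD('a) ^ r)) ^ CARD('a)"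
    by (simp add: mult.commute flip: power_mult)
  also have "[\<dots> = ([:0, 1:] + [:of_nat r * g:] + P * h) ^ CARD('a)] (mod P ^ 2)"
    by (rule cong_pow[OF Suc.IH])
  also have "([:0, 1:] + [:of_nat r * g:] + P * h) ^ CARD('a)
      = [:0, 1:] + [:of_nat (Suc r) * g:] + P * h + P ^ CARD('a) * h ^ CARD('a)"
    unfolding poly_add_power_CARD X_pow_CARD
    by (simp add: poly_const_pow power_CARD_eq_self power_mult_distrib algebra_simps)
  also have "[\<dots> = [:0, 1:] + [:of_nat (Suc r) * g:] + P * h + 0] (mod P ^ 2)"
    by (intro cong_add cong_refl P_pow)
  finally show ?case
    by simp
qed

lemma alpha_mult_cong_1:
  assumes P: "P = [:0, 1:] ^ p - [:alpha:] * [:0, 1:] - [:b:]" and "P \<noteq> 0" "g \<in> G"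
    and X_pow_CARD: "[:0, 1:] ^ CARD('a) = [:0, 1:] + [:g:] + P * h"
  shows "[[:alpha:] * h = 1] (mod P)"
proof -
  define X where "X = ([:0, 1:] :: 'a poly)"
  have "[:g:] ^ p = [:alpha:] * [:g:]"
    using power_p_eq[OF \<open>g \<in> G\<close>] by (simp add: poly_const_pow)
  then have "(X + [:g:] + P * h) ^ p = X ^ p + [:alpha:] * [:g:] + P ^ p * h ^ p"
    by (simp add: poly_add_power_p power_mult_distrib)
  moreover have "P ^ CARD('a) = (X + [:g:] + P * h) ^ p - [:alpha:] * (X + [:g:] + P * h) - [:b:]"
    using trinomial_power_CARD[of alpha b] X_pow_CARD unfolding P X_def by simp
  moreover have "X ^ p = P + [:alpha:] * X + [:b:]"
    by (simp add: P X_def)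
  ultimately have "P * (1 - [:alpha:] * h) = P ^ CARD('a) - P ^ p * h ^ p"
    by (simp add: algebra_simps)
  moreover have "P ^ 2 dvd P ^ CARD('a) - P ^ p * h ^ p"
    using CARD_ge_p p_ge_2 by (intro dvd_diff dvd_mult2 le_imp_power_dvd) auto
  ultimately have "P * P dvd P * (1 - [:alpha:] * h)"
    by (simp add: power2_eq_square)
  then have "P dvd 1 - [:alpha:] * h"
    using \<open>P \<noteq> 0\<close> by simp
  then show ?thesis
    by (simp add: cong_iff_dvd_diff dvd_diff_commute)
qed

lemma G_fixed_irreducibleE:
  assumes "lead_coeff P = 1" "irreducible P" "G_fixed G P" "degree P = p"
  obtains b g h where "P = [:0, 1:] ^ p - [:alpha:] * [:0, 1:] - [:b:]" "prime_elem P"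
    "g \<in> G" "g \<noteq> 0" "[:0, 1:] ^ CARD('a) = [:0, 1:] + [:g:] + P * h" "[[:alpha:] * h = 1] (mod P)"
proof -
  have P: "P = [:0, 1:] ^ p - [:alpha:] * [:0, 1:] - [:- coeff P 0:]"
    using assms(1,4,3) by (rule G_fixed_imp_trinomial)
  have prime: "prime_elem P"
    using assms(2) by (rule field_poly_irreducible_imp_prime)
  obtain g where g: "g \<in> G" "P dvd [:0, 1:] ^ CARD('a) - [:0, 1:] - [:g:]"
    using X_pow_CARD_mod_G_shift[OF P prime] by blast
  have "g \<noteq> 0"
  proof
    assume "g = 0"
    then have "P dvd [:0, 1:] ^ CARD('a) - [:0, 1:]"
      using g(2) by simp
    then show False
      using prime_elem_not_dvd_X_pow_CARD_minus_X[OF prime] assms(4) p_ge_2 CARD_ge_p by simp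
  qed
  define h where "h = ([:0, 1:] ^ CARD('a) - [:0, 1:] - [:g:]) div P"
  have X_pow_CARD: "[:0, 1:] ^ CARD('a) = [:0, 1:] + [:g:] + P * h"
    using dvd_mult_div_cancel[OF g(2)] unfolding h_def by (simp add: algebra_simps)
  have "P \<noteq> 0"
    using prime by auto
  show thesis
    by (rule that[OF P prime g(1) \<open>g \<noteq> 0\<close> X_pow_CARD alpha_mult_cong_1[OF P \<open>P \<noteq> 0\<close> g(1) X_pow_CARD]])
qed

lemma carlitz_wieferich_cong_CARD_power_iff:
  assumes "P = [:0, 1:] ^ p - [:alpha:] * [:0, 1:] - [:b:]" "prime_elem P"
    and X_pow_CARD: "[:0, 1:] ^ CARD('a) = [:0, 1:] + [:g:] + P * h"
    and "[[:alpha:] * h = 1] (mod P)" and "r > 0"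
  shows "carlitz_wieferich_cong (CARD('a) ^ r) P
    \<longleftrightarrow> bell (of_nat r * g) p = alpha + 1 \<and> bell (of_nat r * g) (p - 1) = alpha"
proof (rule carlitz_wieferich_cong_iff_bell)
  show "CARD('a) ^ r = p ^ (n * r)"
    by (simp add: CARD_eq power_mult)
  show "n * r > 0"
    using n_pos \<open>r > 0\<close> by simp
  show "[[:0, 1:] ^ CARD('a) ^ r = [:0, 1:] + [:of_nat r * g:] + P * h] (mod P\<^sup>2)"
    by (rule X_pow_CARD_power_mod_sq[OF X_pow_CARD \<open>r > 0\<close>])
qed (use assms CHAR_eq prime power_CARD_power_eq_self in auto)

end

theorem corollary5p4:
  fixes G :: "'a::{finite,field} set" and p n :: nat
  assumes "prime p" and "n > 0" and "CARD('a) = p ^ n"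
    and "0 \<in> G" and "\<And>a b. a \<in> G \<Longrightarrow> b \<in> G \<Longrightarrow> a + b \<in> G"
    and "\<And>a. a \<in> G \<Longrightarrow> - a \<in> G" and "card G = p"
    and "\<exists>P0. c_wieferich P0 \<and> G_fixed G P0 \<and> degree P0 = p"
  shows "\<forall>P::'a poly. lead_coeff P = 1 \<and> irreducible P \<and> G_fixed G P \<and> degree P = p \<longrightarrow>
           (\<exists>r\<in>{1..p-1}. carlitz_wieferich_cong (CARD('a) ^ r) P)"
proof (intro allI impI)
  interpret prime_order_subgroup G p n
    using assms(1-5,7) by unfold_locales
  obtain P0 where P0_hyps: "c_wieferich P0" "G_fixed G P0" "degree P0 = p"
    using assms(8) by blast
  then have P0_monic_irreducible: "lead_coeff P0 = 1" "irreducible P0"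
    and wieferich_P0: "carlitz_wieferich_cong CARD('a) P0"
    by (simp_all add: c_wieferich_def)
  obtain b0 g0 h0 where P0: "P0 = [:0, 1:] ^ p - [:alpha:] * [:0, 1:] - [:b0:]" "prime_elem P0"
    "g0 \<in> G" "g0 \<noteq> 0" "[:0, 1:] ^ CARD('a) = [:0, 1:] + [:g0:] + P0 * h0" "[[:alpha:] * h0 = 1] (mod P0)"
    using P0_monic_irreducible P0_hyps(2,3) by (rule G_fixed_irreducibleE)
  have bell_g0: "bell g0 p = alpha + 1 \<and> bell g0 (p - 1) = alpha"
    using carlitz_wieferich_cong_CARD_power_iff[OF P0(1,2,5,6), of 1] wieferich_P0 by simp
  fix P :: "'a poly"
  assume "lead_coeff P = 1 \<and> irreducible P \<and> G_fixed G P \<and> degree P = p"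
  then obtain b g h where P: "P = [:0, 1:] ^ p - [:alpha:] * [:0, 1:] - [:b:]" "prime_elem P"
    "g \<in> G" "g \<noteq> 0" "[:0, 1:] ^ CARD('a) = [:0, 1:] + [:g:] + P * h" "[[:alpha:] * h = 1] (mod P)"
    using G_fixed_irreducibleE by blast
  obtain r where r: "r < p" "g0 = of_nat r * g"
    using G_eq_multiples[OF P(3,4)] P0(3) by auto
  have "r \<noteq> 0"
    using P0(4) r(2) by (metis mult_zero_left of_nat_0)
  then have "carlitz_wieferich_cong (CARD('a) ^ r) P"
    using carlitz_wieferich_cong_CARD_power_iff[OF P(1,2,5,6)] bell_g0 r(2) by simp
  then show "\<exists>r\<in>{1..p-1}. carlitz_wieferich_cong (CARD('a) ^ r) P"
    using r(1) \<open>r \<noteq> 0\<close> by (intro bexI[of _ r]) auto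
qed

end
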